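(* For every graph $G$, $\operatorname{box}(G)\le 2\,MED(G)+2$.
   Context: A dominating edge set of $G$ is a set $D$ of edges such that every edge of $G$ not in $D$ shares an endpoint with some edge of $D$; $MED(G)$ is the minimum cardinality of a dominating edge set. The boxicity $\operatorname{box}(G)$ is the minimum $b$ such that $G$ is the intersection graph of axis-parallel boxes in $\mathbb{R}^b$ (products of $b$ closed intervals), one box per vertex. *)

theory Defs
  imports Complex_Main
begin

definition simple_graph :: "'a set \<Rightarrow> 'a set set \<Rightarrow> bool" where
  "simple_graph V E \<longleftrightarrow> finite V \<and>
     (\<forall>e\<in>E. \<exists>u v. u \<in> V \<and> v \<in> V \<and> u \<noteq> v \<and> e = {u, v})"

definition dominating_edge_set :: "'a set set \<Rightarrow> 'a set set \<Rightarrow> bool" where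
  "dominating_edge_set E D \<longleftrightarrow> D \<subseteq> E \<and>
     (\<forall>e\<in>E - D. \<exists>d\<in>D. e \<inter> d \<noteq> {})"

definition MED :: "'a set set \<Rightarrow> nat" where
  "MED E = (LEAST k. \<exists>D. dominating_edge_set E D \<and> card D = k)"

text \<open>G has a box representation in R^b: each vertex v gets the box
  \<Prod>_{i<b} [l v i, r v i] (closed, nonempty intervals), and two distinct
  vertices are adjacent iff their boxes intersect.\<close>
definition box_representation :: "'a set \<Rightarrow> 'a set set \<Rightarrow> nat \<Rightarrow> bool" where
  "box_representation V E b \<longleftrightarrow>
     (\<exists>l r :: 'a \<Rightarrow> nat \<Rightarrow> real.
        (\<forall>v\<in>V. \<forall>i<b. l v i \<le> r v i) \<and>
        (\<forall>u\<in>V. \<forall>v\<in>V. u \<noteq> v \<longrightarrow>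
            ({u, v} \<in> E \<longleftrightarrow> (\<forall>i<b. l u i \<le> r v i \<and> l v i \<le> r u i))))"

definition boxicity :: "'a set \<Rightarrow> 'a set set \<Rightarrow> nat" where
  "boxicity V E = (LEAST b. box_representation V E b)"

end

theory Submission
  imports Defs
begin

text \<open>Let D be a minimum dominating edge set. The set S of endpoints of edges of D has at
  most 2 MED(G) elements and meets every edge, i.e. it is a vertex cover. Each s in S gets a
  coordinate in which s is the point 0, its neighbours the interval [0,1] and all other vertices
  the point 1; there two distinct boxes are disjoint exactly when one is s and the other a
  non-neighbour of s. One more coordinate makes the vertices outside S distinct points and lets
  every vertex of S span all of them, so two distinct vertices are disjoint there exactly when
  neither lies in S. As S is a vertex cover, the non-adjacent pairs are exactly those separated
  in some coordinate, so box(G) \<le> card S + 1 \<le> 2 MED(G) + 1.\<close>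

definition vertex_cover :: "'a set set \<Rightarrow> 'a set \<Rightarrow> bool" where
  "vertex_cover E S \<longleftrightarrow> (\<forall>e\<in>E. e \<inter> S \<noteq> {})"

definition overlap :: "real \<times> real \<Rightarrow> real \<times> real \<Rightarrow> bool" where
  "overlap I J \<longleftrightarrow> fst I \<le> snd J \<and> fst J \<le> snd I"

definition star_interval :: "'a set set \<Rightarrow> 'a \<Rightarrow> 'a \<Rightarrow> real \<times> real" where
  "star_interval E s v =
     (if v = s then (0, 0) else if {v, s} \<in> E then (0, 1) else (1, 1))"

definition cover_interval :: "'a set \<Rightarrow> ('a \<Rightarrow> nat) \<Rightarrow> nat \<Rightarrow> 'a \<Rightarrow> real \<times> real" where
  "cover_interval S g M v = (if v \<in> S then (0, real M) else (real (g v), real (g v)))"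

lemma overlap_star_interval:
  assumes "u \<noteq> v"
  shows "overlap (star_interval E s u) (star_interval E s v) \<longleftrightarrow> (s \<in> {u, v} \<longrightarrow> {u, v} \<in> E)"
  using assms by (auto simp: overlap_def star_interval_def insert_commute)

lemma overlap_cover_interval:
  assumes "inj_on g V" and "\<forall>w\<in>V. g w \<le> M"
    and "u \<in> V" and "v \<in> V" and "u \<noteq> v"
  shows "overlap (cover_interval S g M u) (cover_interval S g M v) \<longleftrightarrow> u \<in> S \<or> v \<in> S"
proof -
  have "g u \<noteq> g v"
    using assms by (meson inj_on_eq_iff)
  then show ?thesis
    using assms by (auto simp: overlap_def cover_interval_def)
qed

lemma box_representation_vertex_cover:
  assumes "finite V" and "finite S" and "vertex_cover E S"
  shows "box_representation V E (card S + 1)"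
proof -
  obtain h where h: "bij_betw h {..<card S} S"
    using ex_bij_betw_nat_finite[OF \<open>finite S\<close>] by (auto simp: atLeast0LessThan)
  have all_S: "(\<forall>i<card S. Q (h i)) \<longleftrightarrow> (\<forall>s\<in>S. Q s)" for Q
    using h by (metis bij_betw_imp_surj_on image_iff lessThan_iff)
  obtain g :: "'a \<Rightarrow> nat" and M where g: "g ` V = {..<M}" "inj_on g V"
    using finite_imp_inj_to_nat_seg[OF \<open>finite V\<close>] lessThan_def by metis
  have g_le: "\<forall>w\<in>V. g w \<le> M"
    using g(1) by (metis imageI lessThan_iff less_imp_le)
  define I where "I v i =
    (if i < card S then star_interval E (h i) v else cover_interval S g M v)" for v i
  have nonempty: "fst (I v i) \<le> snd (I v i)" for v i
    by (auto simp: I_def star_interval_def cover_interval_def)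
  have "{u, v} \<in> E \<longleftrightarrow> (\<forall>i<card S + 1. overlap (I u i) (I v i))"
    if "u \<in> V" "v \<in> V" "u \<noteq> v" for u v
  proof -
    have "(\<forall>i<card S + 1. overlap (I u i) (I v i)) \<longleftrightarrow>
        (\<forall>i<card S. overlap (star_interval E (h i) u) (star_interval E (h i) v)) \<and>
        overlap (cover_interval S g M u) (cover_interval S g M v)"
      by (auto simp: I_def less_Suc_eq)
    also have "\<dots> \<longleftrightarrow> (\<forall>i<card S. h i \<in> {u, v} \<longrightarrow> {u, v} \<in> E) \<and> (u \<in> S \<or> v \<in> S)"
      using overlap_star_interval[OF \<open>u \<noteq> v\<close>] overlap_cover_interval[OF g(2) g_le that]
      by simp
    also have "\<dots> \<longleftrightarrow> (\<forall>s\<in>S. s \<in> {u, v} \<longrightarrow> {u, v} \<in> E) \<and> (u \<in> S \<or> v \<in> S)"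
      using all_S[of "\<lambda>s. s \<in> {u, v} \<longrightarrow> {u, v} \<in> E"] by simp
    also have "\<dots> \<longleftrightarrow> {u, v} \<in> E"
      using \<open>vertex_cover E S\<close> unfolding vertex_cover_def by fast
    finally show ?thesis by simp
  qed
  then show ?thesis
    unfolding box_representation_def overlap_def
    by (intro exI[of _ "\<lambda>v i. fst (I v i)"] exI[of _ "\<lambda>v i. snd (I v i)"]) (simp add: nonempty)
qed

lemma simple_graph_edge:
  assumes "simple_graph V E" and "e \<in> E"
  obtains u v where "u \<in> V" "v \<in> V" "u \<noteq> v" "e = {u, v}"
  using assms unfolding simple_graph_def by blast

lemma simple_graph_finite_edges:
  assumes "simple_graph V E"
  shows "finite E"
proof -
  have "E \<subseteq> Pow V"
    using simple_graph_edge[OF assms] by blast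
  moreover have "finite V"
    using assms by (simp add: simple_graph_def)
  ultimately show ?thesis
    by (simp add: finite_subset)
qed

lemma MED_attained:
  "\<exists>D. dominating_edge_set E D \<and> card D = MED E"
proof -
  have "\<exists>k D. dominating_edge_set E D \<and> card D = k"
    by (auto simp: dominating_edge_set_def)
  then show ?thesis
    unfolding MED_def by (rule LeastI_ex)
qed

lemma vertex_cover_Union_dominating_edge_set:
  assumes "dominating_edge_set E D" and "{} \<notin> E"
  shows "vertex_cover E (\<Union>D)"
  unfolding vertex_cover_def
proof
  fix e assume "e \<in> E"
  show "e \<inter> \<Union>D \<noteq> {}"
  proof (cases "e \<in> D")
    case True
    then show ?thesis
      using \<open>e \<in> E\<close> \<open>{} \<notin> E\<close> by (metis Int_absorb2 Union_upper)
  next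
    case False
    then obtain d where "d \<in> D" "e \<inter> d \<noteq> {}"
      using \<open>e \<in> E\<close> assms(1) unfolding dominating_edge_set_def by blast
    then show ?thesis
      by auto
  qed
qed

lemma card_Union_edges_le:
  assumes "simple_graph V E" and "D \<subseteq> E"
  shows "card (\<Union>D) \<le> 2 * card D"
proof -
  have "card e = 2" if "e \<in> D" for e
    using that assms by (auto elim: simple_graph_edge)
  then have "sum card D = 2 * card D"
    by simp
  then show ?thesis
    using card_Union_le_sum_card[of D] by simp
qed

lemma boxicity_le:
  "box_representation V E b \<Longrightarrow> boxicity V E \<le> b"
  unfolding boxicity_def by (rule Least_le)

theorem theorem16:
  fixes V :: "'a set" and E :: "'a set set"
  assumes "simple_graph V E"
  shows "boxicity V E \<le> 2 * MED E + 2"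
proof -
  obtain D where D: "dominating_edge_set E D" "card D = MED E"
    using MED_attained by blast
  have "D \<subseteq> E"
    using D(1) by (simp add: dominating_edge_set_def)
  have "{} \<notin> E"
    using simple_graph_edge[OF assms] by blast
  then have "vertex_cover E (\<Union>D)"
    by (rule vertex_cover_Union_dominating_edge_set[OF D(1)])
  moreover have "finite (\<Union>D)"
    using \<open>D \<subseteq> E\<close> simple_graph_finite_edges[OF assms] simple_graph_edge[OF assms]
    by (metis finite_Union finite_insert finite.emptyI rev_finite_subset subsetD)
  moreover have "finite V"
    using assms by (simp add: simple_graph_def)
  ultimately have "boxicity V E \<le> card (\<Union>D) + 1"
    by (intro boxicity_le box_representation_vertex_cover)
  also have "\<dots> \<le> 2 * MED E + 1"
    using card_Union_edges_le[OF assms \<open>D \<subseteq> E\<close>] D(2) by simp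
  finally show ?thesis by simp
qed

end
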